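(* Let $T$ be a Cartesian tree with root $i$, left subtree $A$ and right subtree $B$. If $A$ is nonempty then $|ng(T,i-1)|=lbl(B)+1$, and if $B$ is nonempty then $|ng(T,i)|=lbr(A)+1$.
   Context: Sequences are finite sequences of pairwise distinct integers indexed from $1$. The Cartesian tree $C(x)$ of a sequence $x$ of length $n$ is empty if $n=0$; otherwise, if $x[i]$ is the minimum of $x$, it is the binary tree with root $i$ (nodes labelled by positions), left subtree $C(x[1\ldots i-1])$ and right subtree $C(x[i+1\ldots n])$. For $1\le i\le n-1$, $\tau(x,i)$ is obtained from $x$ by exchanging $x[i]$ and $x[i+1]$. For a Cartesian tree $T$ with $n$ nodes and $1\le i\le n-1$, $ng(T,i)=\{C(\tau(x,i)) : x \text{ a sequence with } C(x)=T\}$. For a binary tree $T$, $lbl(T)=0$ if $T$ is empty and $lbl(T)=1+lbl(A)$ where $A$ is the left subtree of $T$ otherwise (number of nodes on the left branch); $lbr$ is defined symmetrically with right subtrees. *)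

theory Defs
  imports Main "HOL-Library.Tree"
begin

text \<open>Sequences are int lists (indexed from 1 in the paper; x[k] = x ! (k-1)).
  Cartesian trees are nat trees whose node labels are the (1-based) positions
  in the original sequence. cart_aux k xs builds the Cartesian tree of the
  subsequence xs whose first element sits at position k+1 of the original sequence.\<close>

lemma takeWhile_len_lt: "x \<in> set xs \<Longrightarrow> \<not> P x \<Longrightarrow> length (takeWhile P xs) < length xs"
  by (induction xs) auto

function cart_aux :: "nat \<Rightarrow> int list \<Rightarrow> nat tree" where
  "cart_aux k xs =
     (if xs = [] then Leaf
      else (let m = Min (set xs);
                L = takeWhile (\<lambda>y. y \<noteq> m) xs;
                R = tl (dropWhile (\<lambda>y. y \<noteq> m) xs);
                j = length L + 1
            in Node (cart_aux k L) (k + j) (cart_aux (k + j) R)))"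
  by pat_completeness auto
termination
proof (relation "measure (\<lambda>(k, xs). length xs)")
  show "wf (measure (\<lambda>(k, xs). length xs))" by simp
next
  fix k :: nat and xs :: "int list" and m L
  assume "xs \<noteq> []" "m = Min (set xs)" "L = takeWhile (\<lambda>y. y \<noteq> m) xs"
  then show "((k, L), k, xs) \<in> measure (\<lambda>(k, xs). length xs)"
    using takeWhile_len_lt[of "Min (set xs)" xs] by simp
next
  fix k :: nat and xs :: "int list" and m L R j
  assume "xs \<noteq> []" "m = Min (set xs)" "R = tl (dropWhile (\<lambda>y. y \<noteq> m) xs)"
  then show "((k + j, R), k, xs) \<in> measure (\<lambda>(k, xs). length xs)"
    using length_dropWhile_le[of "\<lambda>y. y \<noteq> Min (set xs)" xs]
    by (cases xs) auto
qed

definition cart :: "int list \<Rightarrow> nat tree" where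
  "cart x = cart_aux 0 x"

definition tau :: "int list \<Rightarrow> nat \<Rightarrow> int list" where
  "tau x i = x[i - 1 := x ! i, i := x ! (i - 1)]"

definition ng :: "nat tree \<Rightarrow> nat \<Rightarrow> nat tree set" where
  "ng T i = {cart (tau x i) | x. distinct x \<and> cart x = T}"

fun lbl :: "'a tree \<Rightarrow> nat" where
  "lbl Leaf = 0"
| "lbl (Node l _ r) = 1 + lbl l"

fun lbr :: "'a tree \<Rightarrow> nat" where
  "lbr Leaf = 0"
| "lbr (Node l _ r) = 1 + lbr r"

end

theory Submission
  imports Defs
begin

text \<open>
  Write \<open>x = L @ m # R\<close> with \<open>m\<close> the minimum, so that \<open>A = C(L)\<close>, \<open>B = C(R)\<close> and
  \<open>i = |L| + 1\<close>. If \<open>L = P @ [a]\<close>, swapping positions \<open>i - 1\<close> and \<open>i\<close> gives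
  \<open>P @ m # a # R\<close>: its tree has root \<open>i - 1\<close>, left subtree \<open>C(P)\<close>, which is \<open>A\<close> without
  its rightmost node, and right subtree \<open>C(a # R)\<close>, which is \<open>B\<close> with a new node inserted
  on its left spine, below exactly those spine nodes whose values are smaller than \<open>a\<close>.
  So only the insertion depth \<open>0..lbl B\<close> varies, and every depth occurs: doubling \<open>R\<close>
  leaves odd gaps, one of which receives \<open>a\<close> after an affine map with odd offset, which
  changes neither \<open>C(P @ [a])\<close> nor \<open>C(R)\<close>. Distinct depths give distinct trees. The
  case of \<open>ng T i\<close> is the mirror image, the first entry of \<open>R\<close> moving onto the right
  spine of \<open>A\<close>.
\<close>

declare cart_aux.simps[simp del]

lemma cart_aux_Nil [simp]: "cart_aux k [] = Leaf"
  by (simp add: cart_aux.simps)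

lemma cart_aux_eq_Leaf_iff [simp]: "cart_aux k xs = Leaf \<longleftrightarrow> xs = []"
  by (simp add: cart_aux.simps Let_def)

lemma cart_aux_append_Cons:
  assumes "\<forall>y\<in>set L. m < y" and "\<forall>y\<in>set R. m < y"
  shows "cart_aux k (L @ m # R) =
    Node (cart_aux k L) (k + length L + 1) (cart_aux (k + length L + 1) R)"
proof -
  have Min: "Min (set (L @ m # R)) = m"
    using assms by (intro Min_eqI) auto
  have "m \<notin> set L"
    using assms(1) by auto
  then have "takeWhile (\<lambda>y. y \<noteq> m) (L @ m # R) = L"
    and "dropWhile (\<lambda>y. y \<noteq> m) (L @ m # R) = m # R"
    by (induction L) auto
  with Min show ?thesis
    by (subst cart_aux.simps) (simp add: Let_def)
qed

lemma cart_append_Cons: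
  "\<forall>y\<in>set L. m < y \<Longrightarrow> \<forall>y\<in>set R. m < y \<Longrightarrow>
    cart (L @ m # R) = Node (cart_aux 0 L) (length L + 1) (cart_aux (length L + 1) R)"
  by (simp add: cart_def cart_aux_append_Cons)

lemma cart_aux_Cons_less:
  "\<forall>y\<in>set R. m < y \<Longrightarrow> cart_aux k (m # R) = Node Leaf (k + 1) (cart_aux (k + 1) R)"
  using cart_aux_append_Cons[of "[]" m R k] by simp

lemma cart_aux_snoc_less:
  "\<forall>y\<in>set L. m < y \<Longrightarrow> cart_aux k (L @ [m]) = Node (cart_aux k L) (k + length L + 1) Leaf"
  using cart_aux_append_Cons[of L m "[]" k] by simp

lemma split_list_at_Min:
  fixes xs :: "'a::linorder list"
  assumes "distinct xs" and "xs \<noteq> []"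
  obtains L m R where "xs = L @ m # R" and "\<forall>y\<in>set L. m < y" and "\<forall>y\<in>set R. m < y"
proof -
  obtain L R where xs: "xs = L @ Min (set xs) # R"
    using assms(2) by (meson Min_in finite_set set_empty split_list)
  moreover have "Min (set xs) < y" if "y \<in> set L \<union> set R" for y
  proof -
    have "y \<noteq> Min (set xs)"
      using assms(1) that by (subst (asm) xs) auto
    moreover have "Min (set xs) \<le> y"
      using that by (subst xs) simp
    ultimately show ?thesis
      by simp
  qed
  ultimately show thesis
    using that by blast
qed

lemma cart_NodeE:
  assumes "distinct z" and "cart z = Node A i B"
  obtains L m R where "z = L @ m # R" and "\<forall>y\<in>set L. m < y" and "\<forall>y\<in>set R. m < y"
    and "A = cart_aux 0 L" and "i = length L + 1" and "B = cart_aux i R"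
proof -
  have "z \<noteq> []"
    using assms(2) by (auto simp: cart_def)
  with assms(1) obtain L m R where z: "z = L @ m # R"
    and L_gt: "\<forall>y\<in>set L. m < y" and R_gt: "\<forall>y\<in>set R. m < y"
    by (rule split_list_at_Min)
  have "cart z = Node (cart_aux 0 L) (length L + 1) (cart_aux (length L + 1) R)"
    using z L_gt R_gt by (simp add: cart_append_Cons)
  with assms(2) have "A = cart_aux 0 L" and "i = length L + 1" and "B = cart_aux i R"
    by auto
  with z L_gt R_gt show thesis
    by (rule that)
qed

lemma cart_aux_map_strict_mono:
  assumes "strict_mono (f :: int \<Rightarrow> int)" and "distinct xs"
  shows "cart_aux k (map f xs) = cart_aux k xs"
  using assms(2)
proof (induction xs arbitrary: k rule: length_induct)
  case (1 xs)
  show ?case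
  proof (cases "xs = []")
    case False
    with "1.prems" obtain L m R
      where xs: "xs = L @ m # R" and L_gt: "\<forall>y\<in>set L. m < y" and R_gt: "\<forall>y\<in>set R. m < y"
      by (rule split_list_at_Min)
    have "\<forall>y\<in>set (map f L). f m < y" and "\<forall>y\<in>set (map f R). f m < y"
      using L_gt R_gt assms(1) by (auto dest: strict_monoD)
    with xs L_gt R_gt "1" show ?thesis
      by (simp add: cart_aux_append_Cons)
  qed simp
qed

lemma cart_aux_map_double:
  "distinct xs \<Longrightarrow> cart_aux k (map ((*) (2 :: int)) xs) = cart_aux k xs"
  by (rule cart_aux_map_strict_mono) (auto intro: strict_monoI)

lemma cart_aux_map_double_plus:
  "distinct xs \<Longrightarrow> cart_aux k (map (\<lambda>v. 2 * v + c) xs) = cart_aux k (xs :: int list)"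
  by (rule cart_aux_map_strict_mono) (auto intro: strict_monoI)

lemma tau_append_Cons_Cons: "tau (P @ u # w # R) (length P + 1) = P @ w # u # R"
  by (simp add: tau_def nth_append list_update_append)

fun del_rightmost :: "'a tree \<Rightarrow> 'a tree" where
  "del_rightmost Leaf = Leaf"
| "del_rightmost (Node l v r) = (if r = Leaf then l else Node l v (del_rightmost r))"

fun del_leftmost :: "'a tree \<Rightarrow> 'a tree" where
  "del_leftmost Leaf = Leaf"
| "del_leftmost (Node l v r) = (if l = Leaf then r else Node (del_leftmost l) v r)"

fun ins_left_spine :: "'a \<Rightarrow> nat \<Rightarrow> 'a tree \<Rightarrow> 'a tree" where
  "ins_left_spine p 0 t = Node Leaf p t"
| "ins_left_spine p (Suc d) Leaf = Node Leaf p Leaf"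
| "ins_left_spine p (Suc d) (Node l v r) = Node (ins_left_spine p d l) v r"

fun ins_right_spine :: "'a \<Rightarrow> nat \<Rightarrow> 'a tree \<Rightarrow> 'a tree" where
  "ins_right_spine p 0 t = Node t p Leaf"
| "ins_right_spine p (Suc d) Leaf = Node Leaf p Leaf"
| "ins_right_spine p (Suc d) (Node l v r) = Node l v (ins_right_spine p d r)"

lemma ins_left_spine_neq_Leaf [simp]: "ins_left_spine p d t \<noteq> Leaf"
  by (cases "(p, d, t)" rule: ins_left_spine.cases) auto

lemma ins_right_spine_neq_Leaf [simp]: "ins_right_spine p d t \<noteq> Leaf"
  by (cases "(p, d, t)" rule: ins_right_spine.cases) auto

lemma inj_on_ins_left_spine: "inj_on (\<lambda>d. ins_left_spine p d t) {0..lbl t}"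
proof -
  have "d = e" if "d \<le> lbl t" "e \<le> lbl t" "ins_left_spine p d t = ins_left_spine p e t" for d e
    using that
  proof (induction t arbitrary: d e)
    case (Node l v r)
    then show ?case
      by (cases d; cases e) (auto dest: sym)
  qed simp
  then show ?thesis
    by (auto intro: inj_onI)
qed

lemma inj_on_ins_right_spine: "inj_on (\<lambda>d. ins_right_spine p d t) {0..lbr t}"
proof -
  have "d = e" if "d \<le> lbr t" "e \<le> lbr t" "ins_right_spine p d t = ins_right_spine p e t" for d e
    using that
  proof (induction t arbitrary: d e)
    case (Node l v r)
    then show ?case
      by (cases d; cases e) (auto dest: sym)
  qed simp
  then show ?thesis
    by (auto intro: inj_onI)
qed

lemma del_rightmost_cart_aux_snoc:
  assumes "distinct (P @ [a])"
  shows "del_rightmost (cart_aux k (P @ [a])) = cart_aux k P"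
  using assms
proof (induction P arbitrary: k rule: length_induct)
  case (1 P)
  obtain L m R where split: "P @ [a] = L @ m # R"
    and L_gt: "\<forall>y\<in>set L. m < y" and R_gt: "\<forall>y\<in>set R. m < y"
    using split_list_at_Min[OF "1.prems"] by blast
  show ?case
  proof (cases R rule: rev_cases)
    case Nil
    with split L_gt show ?thesis
      by (simp add: cart_aux_append_Cons)
  next
    case (snoc R' a')
    with split have P: "P = L @ m # R'" and R: "R = R' @ [a]"
      by simp_all
    with "1" have "del_rightmost (cart_aux j (R' @ [a])) = cart_aux j R'" for j
      by simp
    moreover have "\<forall>y\<in>set R'. m < y"
      using R_gt R by simp
    ultimately show ?thesis
      using split P R L_gt R_gt by (simp add: cart_aux_append_Cons)
  qed
qed

lemma del_leftmost_cart_aux_Cons: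
  assumes "distinct (a # Q)"
  shows "del_leftmost (cart_aux k (a # Q)) = cart_aux (k + 1) Q"
  using assms
proof (induction Q arbitrary: k rule: length_induct)
  case (1 Q)
  obtain L m R where split: "a # Q = L @ m # R"
    and L_gt: "\<forall>y\<in>set L. m < y" and R_gt: "\<forall>y\<in>set R. m < y"
    using split_list_at_Min[OF "1.prems"] by blast
  show ?case
  proof (cases L)
    case Nil
    with split R_gt show ?thesis
      using cart_aux_Cons_less by simp
  next
    case (Cons a' L')
    with split have Q: "Q = L' @ m # R" and L: "L = a # L'"
      by simp_all
    with "1.IH" "1.prems" have "del_leftmost (cart_aux k (a # L')) = cart_aux (k + 1) L'"
      by simp
    moreover have "\<forall>y\<in>set L'. m < y"
      using L_gt L by simp
    ultimately show ?thesis
      using split Q L L_gt R_gt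
        cart_aux_append_Cons[of L m R k] cart_aux_append_Cons[of L' m R "k + 1"]
      by simp
  qed
qed

lemma cart_aux_Cons_ins_left_spine:
  assumes "distinct (a # Q)"
  shows "\<exists>d \<le> lbl (cart_aux (k + 1) Q).
    cart_aux k (a # Q) = ins_left_spine (k + 1) d (cart_aux (k + 1) Q)"
  using assms
proof (induction Q rule: length_induct)
  case (1 Q)
  obtain L m R where split: "a # Q = L @ m # R"
    and L_gt: "\<forall>y\<in>set L. m < y" and R_gt: "\<forall>y\<in>set R. m < y"
    using split_list_at_Min[OF "1.prems"] by blast
  show ?case
  proof (cases L)
    case Nil
    with split R_gt have "cart_aux k (a # Q) = ins_left_spine (k + 1) 0 (cart_aux (k + 1) Q)"
      using cart_aux_Cons_less by simp
    then show ?thesis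
      by blast
  next
    case (Cons a' L')
    with split have Q: "Q = L' @ m # R" and L: "L = a # L'"
      by simp_all
    with "1.IH" "1.prems" obtain d where d: "d \<le> lbl (cart_aux (k + 1) L')"
      and IH: "cart_aux k (a # L') = ins_left_spine (k + 1) d (cart_aux (k + 1) L')"
      by (auto dest!: spec[of _ L'])
    have "\<forall>y\<in>set L'. m < y"
      using L_gt L by simp
    then have Q_tree: "cart_aux (k + 1) Q =
        Node (cart_aux (k + 1) L') (k + length L + 1) (cart_aux (k + length L + 1) R)"
      using Q L R_gt cart_aux_append_Cons[of L' m R "k + 1"] by simp
    moreover have "cart_aux k (a # Q) =
        Node (cart_aux k (a # L')) (k + length L + 1) (cart_aux (k + length L + 1) R)"
      using split L L_gt R_gt cart_aux_append_Cons[of L m R k] by simp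
    ultimately have "cart_aux k (a # Q) = ins_left_spine (k + 1) (Suc d) (cart_aux (k + 1) Q)"
      using IH by simp
    with d Q_tree show ?thesis
      by (intro exI[of _ "Suc d"]) simp
  qed
qed

lemma cart_aux_snoc_ins_right_spine:
  assumes "distinct (Q @ [b])"
  shows "\<exists>d \<le> lbr (cart_aux k Q).
    cart_aux k (Q @ [b]) = ins_right_spine (k + length Q + 1) d (cart_aux k Q)"
  using assms
proof (induction Q arbitrary: k rule: length_induct)
  case (1 Q)
  obtain L m R where split: "Q @ [b] = L @ m # R"
    and L_gt: "\<forall>y\<in>set L. m < y" and R_gt: "\<forall>y\<in>set R. m < y"
    using split_list_at_Min[OF "1.prems"] by blast
  show ?case
  proof (cases R rule: rev_cases)
    case Nil
    with split L_gt
    have "cart_aux k (Q @ [b]) = ins_right_spine (k + length Q + 1) 0 (cart_aux k Q)"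
      using cart_aux_snoc_less by simp
    then show ?thesis
      by blast
  next
    case (snoc R' b')
    with split have Q: "Q = L @ m # R'" and R: "R = R' @ [b]"
      by simp_all
    define k' where "k' = k + length L + 1"
    from "1.IH" "1.prems" Q obtain d where d: "d \<le> lbr (cart_aux k' R')"
      and IH: "cart_aux k' (R' @ [b]) = ins_right_spine (k' + length R' + 1) d (cart_aux k' R')"
      by (auto dest!: spec[of _ R'])
    have "\<forall>y\<in>set R'. m < y"
      using R_gt R by simp
    then have Q_tree: "cart_aux k Q = Node (cart_aux k L) k' (cart_aux k' R')"
      using Q L_gt cart_aux_append_Cons[of L m R' k] by (simp add: k'_def)
    moreover have "cart_aux k (Q @ [b]) = Node (cart_aux k L) k' (cart_aux k' (R' @ [b]))"
      using split R L_gt R_gt cart_aux_append_Cons[of L m R k] by (simp add: k'_def)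
    ultimately have
      "cart_aux k (Q @ [b]) = ins_right_spine (k + length Q + 1) (Suc d) (cart_aux k Q)"
      using IH Q by (simp add: k'_def add.assoc)
    with d Q_tree show ?thesis
      by (intro exI[of _ "Suc d"]) simp
  qed
qed

lemma ex_cart_aux_Cons_double_eq_ins_left_spine:
  fixes Q :: "int list"
  assumes "distinct Q" and "\<forall>y\<in>set Q. lo < y" and "d \<le> lbl (cart_aux (k + 1) Q)"
  shows "\<exists>s. odd s \<and> 2 * lo < s \<and>
    cart_aux k (s # map ((*) 2) Q) = ins_left_spine (k + 1) d (cart_aux (k + 1) Q)"
  using assms
proof (induction Q arbitrary: lo d rule: length_induct)
  case (1 Q)
  show ?case
  proof (cases d)
    case 0
    have "\<forall>y\<in>set (map ((*) 2) Q). 2 * lo + 1 < y"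
      using "1.prems"(2) by auto
    then have "cart_aux k ((2 * lo + 1) # map ((*) 2) Q) =
        ins_left_spine (k + 1) d (cart_aux (k + 1) Q)"
      using cart_aux_Cons_less cart_aux_map_double "1.prems"(1) 0 by simp
    then show ?thesis
      by (intro exI[of _ "2 * lo + 1"]) simp
  next
    case (Suc d')
    with "1.prems"(3) have "Q \<noteq> []"
      by auto
    with "1.prems"(1) obtain L m R where Q: "Q = L @ m # R"
      and L_gt: "\<forall>y\<in>set L. m < y" and R_gt: "\<forall>y\<in>set R. m < y"
      by (rule split_list_at_Min)
    have Q_tree: "cart_aux (k + 1) Q =
        Node (cart_aux (k + 1) L) (k + length L + 2) (cart_aux (k + length L + 2) R)"
      using Q L_gt R_gt cart_aux_append_Cons[of L m R "k + 1"] by simp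
    have "d' \<le> lbl (cart_aux (k + 1) L)"
      using "1.prems"(3) Q_tree Suc by simp
    moreover have "length L < length Q" and "distinct L"
      using Q "1.prems"(1) by simp_all
    ultimately obtain s where s: "odd s" "2 * m < s"
      and s_tree: "cart_aux k (s # map ((*) 2) L) = ins_left_spine (k + 1) d' (cart_aux (k + 1) L)"
      using "1.IH" L_gt by blast
    have "\<forall>y\<in>set (s # map ((*) 2) L). 2 * m < y" and "\<forall>y\<in>set (map ((*) 2) R). 2 * m < y"
      using s L_gt R_gt by auto
    then have "cart_aux k (s # map ((*) 2) Q) = Node (cart_aux k (s # map ((*) 2) L))
        (k + length L + 2) (cart_aux (k + length L + 2) (map ((*) 2) R))"
      using Q cart_aux_append_Cons[of "s # map ((*) 2) L" "2 * m" "map ((*) 2) R" k] by simp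
    also have "\<dots> = ins_left_spine (k + 1) d (cart_aux (k + 1) Q)"
      using s_tree Q_tree Suc cart_aux_map_double "1.prems"(1) Q by simp
    finally show ?thesis
      using s "1.prems"(2) Q by (intro exI[of _ s]) simp
  qed
qed

lemma ex_cart_aux_snoc_double_eq_ins_right_spine:
  fixes Q :: "int list"
  assumes "distinct Q" and "\<forall>y\<in>set Q. lo < y" and "d \<le> lbr (cart_aux k Q)"
  shows "\<exists>s. odd s \<and> 2 * lo < s \<and>
    cart_aux k (map ((*) 2) Q @ [s]) = ins_right_spine (k + length Q + 1) d (cart_aux k Q)"
  using assms
proof (induction Q arbitrary: lo d k rule: length_induct)
  case (1 Q)
  show ?case
  proof (cases d)
    case 0
    have "\<forall>y\<in>set (map ((*) 2) Q). 2 * lo + 1 < y"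
      using "1.prems"(2) by auto
    then have "cart_aux k (map ((*) 2) Q @ [2 * lo + 1]) =
        ins_right_spine (k + length Q + 1) d (cart_aux k Q)"
      using cart_aux_snoc_less cart_aux_map_double "1.prems"(1) 0 by simp
    then show ?thesis
      by (intro exI[of _ "2 * lo + 1"]) simp
  next
    case (Suc d')
    with "1.prems"(3) have "Q \<noteq> []"
      by auto
    with "1.prems"(1) obtain L m R where Q: "Q = L @ m # R"
      and L_gt: "\<forall>y\<in>set L. m < y" and R_gt: "\<forall>y\<in>set R. m < y"
      by (rule split_list_at_Min)
    define k' where "k' = k + length L + 1"
    have Q_tree: "cart_aux k Q = Node (cart_aux k L) k' (cart_aux k' R)"
      using Q L_gt R_gt cart_aux_append_Cons[of L m R k] by (simp add: k'_def)
    have "d' \<le> lbr (cart_aux k' R)"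
      using "1.prems"(3) Q_tree Suc by simp
    moreover have "length R < length Q" and "distinct R"
      using Q "1.prems"(1) by simp_all
    ultimately obtain s where s: "odd s" "2 * m < s" and s_tree:
      "cart_aux k' (map ((*) 2) R @ [s]) = ins_right_spine (k' + length R + 1) d' (cart_aux k' R)"
      using "1.IH" R_gt by blast
    have "\<forall>y\<in>set (map ((*) 2) L). 2 * m < y" and "\<forall>y\<in>set (map ((*) 2) R @ [s]). 2 * m < y"
      using s L_gt R_gt by auto
    then have "cart_aux k (map ((*) 2) Q @ [s]) =
        Node (cart_aux k (map ((*) 2) L)) k' (cart_aux k' (map ((*) 2) R @ [s]))"
      using Q cart_aux_append_Cons[of "map ((*) 2) L" "2 * m" "map ((*) 2) R @ [s]" k]
      by (simp add: k'_def)
    also have "\<dots> = ins_right_spine (k + length Q + 1) d (cart_aux k Q)"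
      using s_tree Q_tree Suc cart_aux_map_double "1.prems"(1) Q by (simp add: k'_def add.assoc)
    finally show ?thesis
      using s "1.prems"(2) Q by (intro exI[of _ s]) simp
  qed
qed

lemma distinct_map_double_plus_odd_append:
  fixes xs ys :: "int list"
  assumes "distinct xs" and "distinct ys" and "odd c"
  shows "distinct (map (\<lambda>v. 2 * v + c) xs @ map ((*) 2) ys)"
    and "distinct (map ((*) 2) ys @ map (\<lambda>v. 2 * v + c) xs)"
proof -
  have "2 * u + c \<noteq> 2 * v" for u v
    using assms(3) by presburger
  then show "distinct (map (\<lambda>v. 2 * v + c) xs @ map ((*) 2) ys)"
    using assms(1,2) by (auto simp: distinct_map inj_on_def)
  then show "distinct (map ((*) 2) ys @ map (\<lambda>v. 2 * v + c) xs)"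
    by auto
qed

lemma ex_new_Min_between:
  fixes U V :: "int list"
  assumes "distinct (U @ V)"
  obtains m where "distinct (U @ m # V)" and "\<forall>v\<in>set U. m < v" and "\<forall>v\<in>set V. m < v"
proof -
  have "\<exists>m :: int. \<forall>v\<in>set xs. m < v" for xs
  proof (induction xs)
    case (Cons x xs)
    then obtain m where "\<forall>v\<in>set xs. m < v"
      by blast
    then show ?case
      by (intro exI[of _ "min m (x - 1)"]) auto
  qed simp
  then obtain m where "\<forall>v\<in>set (U @ V). m < v"
    by blast
  with assms show thesis
    by (intro that) auto
qed

lemma cart_tau_pred_root:
  assumes "distinct z" and "cart z = Node A i B" and "A \<noteq> Leaf"
  shows "\<exists>d \<le> lbl B. cart (tau z (i - 1)) = Node (del_rightmost A) (i - 1) (ins_left_spine i d B)"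
proof -
  obtain L m R where z: "z = L @ m # R" and L_gt: "\<forall>y\<in>set L. m < y" and R_gt: "\<forall>y\<in>set R. m < y"
    and A: "A = cart_aux 0 L" and i: "i = length L + 1" and B: "B = cart_aux i R"
    using assms(1,2) by (rule cart_NodeE)
  obtain P a where L: "L = P @ [a]"
    using assms(3) A by (cases L rule: rev_cases) auto
  have "tau z (i - 1) = P @ m # a # R"
    using tau_append_Cons_Cons[of P a m R] z L i by simp
  then have "cart (tau z (i - 1)) = Node (cart_aux 0 P) (i - 1) (cart_aux (i - 1) (a # R))"
    using L_gt R_gt L i cart_append_Cons[of P m "a # R"] by simp
  moreover have "cart_aux 0 P = del_rightmost A"
    using del_rightmost_cart_aux_snoc[of P a 0] assms(1) z L A by simp
  moreover obtain d where "d \<le> lbl B" "cart_aux (i - 1) (a # R) = ins_left_spine i d B"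
    using cart_aux_Cons_ins_left_spine[of a R "i - 1"] assms(1) z L i B by auto
  ultimately show ?thesis
    by auto
qed

lemma ex_cart_tau_pred_root:
  assumes "distinct x" and "cart x = Node A i B" and "A \<noteq> Leaf" and "d \<le> lbl B"
  shows "\<exists>y. distinct y \<and> cart y = Node A i B \<and>
    cart (tau y (i - 1)) = Node (del_rightmost A) (i - 1) (ins_left_spine i d B)"
proof -
  obtain L m R where x: "x = L @ m # R" and R_gt: "\<forall>y\<in>set R. m < y"
    and A: "A = cart_aux 0 L" and i: "i = length L + 1" and B: "B = cart_aux i R"
    using assms(1,2) by (rule cart_NodeE)
  obtain P a where L: "L = P @ [a]"
    using assms(3) A by (cases L rule: rev_cases) auto
  obtain s where "odd s" and s_tree: "cart_aux (i - 1) (s # map ((*) 2) R) = ins_left_spine i d B"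
    using ex_cart_aux_Cons_double_eq_ins_left_spine[of R m d "i - 1"] assms(1,4) x R_gt L i B
    by auto
  define f where "f = (\<lambda>v. 2 * v + (s - 2 * a))"
  have "f a = s"
    by (simp add: f_def)
  have distinct: "distinct (P @ [a])" "distinct R"
    using assms(1) x L by simp_all
  have f_tree: "cart_aux k (map f xs) = cart_aux k xs" if "distinct xs" for k xs
    using that by (simp add: f_def cart_aux_map_double_plus)
  have "distinct (map f (P @ [a]) @ map ((*) 2) R)"
    unfolding f_def using \<open>odd s\<close> by (intro distinct_map_double_plus_odd_append(1) distinct) simp
  then obtain m' where "distinct (map f (P @ [a]) @ m' # map ((*) 2) R)"
    and f_gt: "\<forall>v\<in>set (map f (P @ [a])). m' < v" and double_gt: "\<forall>v\<in>set (map ((*) 2) R). m' < v"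
    by (rule ex_new_Min_between)
  define y where "y = map f (P @ [a]) @ m' # map ((*) 2) R"
  have "distinct y"
    unfolding y_def by fact
  moreover have "cart y = Node A i B"
    using cart_append_Cons[OF f_gt double_gt]
      f_tree[OF distinct(1)] cart_aux_map_double[OF distinct(2)] A B L i
    by (simp add: y_def del: map_append)
  moreover have "cart (tau y (i - 1)) = Node (del_rightmost A) (i - 1) (ins_left_spine i d B)"
  proof -
    have "tau y (i - 1) = map f P @ m' # s # map ((*) 2) R"
      using tau_append_Cons_Cons[of "map f P" s m'] \<open>f a = s\<close> L i by (simp add: y_def)
    moreover have "cart_aux 0 (map f P) = del_rightmost A"
      using del_rightmost_cart_aux_snoc[of P a 0] distinct A L by (simp add: f_tree)
    ultimately show ?thesis
      using cart_append_Cons[of "map f P" m' "s # map ((*) 2) R"] f_gt double_gt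
        \<open>f a = s\<close> s_tree L i
      by simp
  qed
  ultimately show ?thesis
    by blast
qed

lemma cart_tau_root_succ:
  assumes "distinct z" and "cart z = Node A i B" and "B \<noteq> Leaf"
  shows "\<exists>d \<le> lbr A. cart (tau z i) = Node (ins_right_spine i d A) (i + 1) (del_leftmost B)"
proof -
  obtain L m R where z: "z = L @ m # R" and L_gt: "\<forall>y\<in>set L. m < y" and R_gt: "\<forall>y\<in>set R. m < y"
    and A: "A = cart_aux 0 L" and i: "i = length L + 1" and B: "B = cart_aux i R"
    using assms(1,2) by (rule cart_NodeE)
  obtain b R' where R: "R = b # R'"
    using assms(3) B by (cases R) auto
  have "tau z i = (L @ [b]) @ m # R'"
    using tau_append_Cons_Cons[of L m b R'] z R i by simp
  then have "cart (tau z i) = Node (cart_aux 0 (L @ [b])) (i + 1) (cart_aux (i + 1) R')"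
    using L_gt R_gt R i cart_append_Cons[of "L @ [b]" m R'] by simp
  moreover have "cart_aux (i + 1) R' = del_leftmost B"
    using del_leftmost_cart_aux_Cons[of b R' i] assms(1) z R B by simp
  moreover obtain d where "d \<le> lbr A" "cart_aux 0 (L @ [b]) = ins_right_spine i d A"
    using cart_aux_snoc_ins_right_spine[of L b 0] assms(1) z R i A by auto
  ultimately show ?thesis
    by auto
qed

lemma ex_cart_tau_root_succ:
  assumes "distinct x" and "cart x = Node A i B" and "B \<noteq> Leaf" and "d \<le> lbr A"
  shows "\<exists>y. distinct y \<and> cart y = Node A i B \<and>
    cart (tau y i) = Node (ins_right_spine i d A) (i + 1) (del_leftmost B)"
proof -
  obtain L m R where x: "x = L @ m # R" and L_gt: "\<forall>y\<in>set L. m < y"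
    and A: "A = cart_aux 0 L" and i: "i = length L + 1" and B: "B = cart_aux i R"
    using assms(1,2) by (rule cart_NodeE)
  obtain b R' where R: "R = b # R'"
    using assms(3) B by (cases R) auto
  obtain s where "odd s" and s_tree: "cart_aux 0 (map ((*) 2) L @ [s]) = ins_right_spine i d A"
    using ex_cart_aux_snoc_double_eq_ins_right_spine[of L m d 0] assms(1,4) x L_gt A i
    by auto
  define g where "g = (\<lambda>v. 2 * v + (s - 2 * b))"
  have "g b = s"
    by (simp add: g_def)
  have distinct: "distinct (b # R')" "distinct L"
    using assms(1) x R by simp_all
  have g_tree: "cart_aux k (map g xs) = cart_aux k xs" if "distinct xs" for k xs
    using that by (simp add: g_def cart_aux_map_double_plus)
  have "distinct (map ((*) 2) L @ map g (b # R'))"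
    unfolding g_def using \<open>odd s\<close> by (intro distinct_map_double_plus_odd_append(2) distinct) simp
  then obtain m' where "distinct (map ((*) 2) L @ m' # map g (b # R'))"
    and double_gt: "\<forall>v\<in>set (map ((*) 2) L). m' < v" and g_gt: "\<forall>v\<in>set (map g (b # R')). m' < v"
    by (rule ex_new_Min_between)
  define y where "y = map ((*) 2) L @ m' # map g (b # R')"
  have "distinct y"
    unfolding y_def by fact
  moreover have "cart y = Node A i B"
    using cart_append_Cons[OF double_gt g_gt]
      cart_aux_map_double[OF distinct(2)] g_tree[OF distinct(1)] A B R i
    by (simp add: y_def del: list.map)
  moreover have "cart (tau y i) = Node (ins_right_spine i d A) (i + 1) (del_leftmost B)"
  proof -
    have "tau y i = (map ((*) 2) L @ [s]) @ m' # map g R'"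
      using tau_append_Cons_Cons[of "map ((*) 2) L" m' s] \<open>g b = s\<close> i by (simp add: y_def)
    moreover have "cart_aux (i + 1) (map g R') = del_leftmost B"
      using del_leftmost_cart_aux_Cons[of b R' i] distinct B R by (simp add: g_tree)
    ultimately show ?thesis
      using cart_append_Cons[of "map ((*) 2) L @ [s]" m' "map g R'"] double_gt g_gt
        \<open>g b = s\<close> s_tree i
      by simp
  qed
  ultimately show ?thesis
    by blast
qed

lemma ng_pred_root:
  assumes "distinct x" and "cart x = Node A i B" and "A \<noteq> Leaf"
  shows "ng (Node A i B) (i - 1) =
    (\<lambda>d. Node (del_rightmost A) (i - 1) (ins_left_spine i d B)) ` {0..lbl B}"
proof (intro equalityI subsetI)
  fix t
  assume "t \<in> ng (Node A i B) (i - 1)"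
  then obtain z where "distinct z" "cart z = Node A i B" "t = cart (tau z (i - 1))"
    unfolding ng_def by blast
  with assms(3) show "t \<in> (\<lambda>d. Node (del_rightmost A) (i - 1) (ins_left_spine i d B)) ` {0..lbl B}"
    using cart_tau_pred_root by fastforce
next
  fix t
  assume "t \<in> (\<lambda>d. Node (del_rightmost A) (i - 1) (ins_left_spine i d B)) ` {0..lbl B}"
  then obtain d where "d \<le> lbl B" and "t = Node (del_rightmost A) (i - 1) (ins_left_spine i d B)"
    by auto
  with ex_cart_tau_pred_root[OF assms] obtain y
    where "distinct y" and "cart y = Node A i B" and "t = cart (tau y (i - 1))"
    by metis
  then show "t \<in> ng (Node A i B) (i - 1)"
    unfolding ng_def by blast
qed

lemma ng_root_succ:
  assumes "distinct x" and "cart x = Node A i B" and "B \<noteq> Leaf"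
  shows "ng (Node A i B) i =
    (\<lambda>d. Node (ins_right_spine i d A) (i + 1) (del_leftmost B)) ` {0..lbr A}"
proof (intro equalityI subsetI)
  fix t
  assume "t \<in> ng (Node A i B) i"
  then obtain z where "distinct z" "cart z = Node A i B" "t = cart (tau z i)"
    unfolding ng_def by blast
  with assms(3) show "t \<in> (\<lambda>d. Node (ins_right_spine i d A) (i + 1) (del_leftmost B)) ` {0..lbr A}"
    using cart_tau_root_succ by fastforce
next
  fix t
  assume "t \<in> (\<lambda>d. Node (ins_right_spine i d A) (i + 1) (del_leftmost B)) ` {0..lbr A}"
  then obtain d where "d \<le> lbr A" and "t = Node (ins_right_spine i d A) (i + 1) (del_leftmost B)"
    by auto
  with ex_cart_tau_root_succ[OF assms] obtain y
    where "distinct y" and "cart y = Node A i B" and "t = cart (tau y i)"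
    by metis
  then show "t \<in> ng (Node A i B) i"
    unfolding ng_def by blast
qed

theorem lemma8:
  fixes x :: "int list" and A B :: "nat tree" and i :: nat
  assumes "distinct x"
    and "cart x = Node A i B"
  shows "(A \<noteq> Leaf \<longrightarrow> card (ng (Node A i B) (i - 1)) = lbl B + 1)
       \<and> (B \<noteq> Leaf \<longrightarrow> card (ng (Node A i B) i) = lbr A + 1)"
proof (intro conjI impI)
  assume "A \<noteq> Leaf"
  have "inj_on (\<lambda>d. Node (del_rightmost A) (i - 1) (ins_left_spine i d B)) {0..lbl B}"
    using inj_on_ins_left_spine[of i B] by (auto simp: inj_on_def)
  with ng_pred_root[OF assms \<open>A \<noteq> Leaf\<close>] show "card (ng (Node A i B) (i - 1)) = lbl B + 1"
    by (simp add: card_image)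
next
  assume "B \<noteq> Leaf"
  have "inj_on (\<lambda>d. Node (ins_right_spine i d A) (i + 1) (del_leftmost B)) {0..lbr A}"
    using inj_on_ins_right_spine[of i A] by (auto simp: inj_on_def)
  with ng_root_succ[OF assms \<open>B \<noteq> Leaf\<close>] show "card (ng (Node A i B) i) = lbr A + 1"
    by (simp add: card_image)
qed

end
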